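(* (1) Let $a,b\in\mathbb{R}$, $s>0$, and let $W$ be the closed ball $B((a,b),s)\subset\mathbb{R}^{2}$. Then the function $f(x,y)=\frac{1}{|(x,y)-(a,b)|}$ restricted to $\mathbb{R}^{2}\setminus W$ is normal. (2) If $\rho\geq 0$ is a continuous function on $\mathbb{R}^{2}$ with compact support and $\rho\neq 0$, then the function $f(x,y)=\int_{\mathbb{R}^{2}}\frac{\rho(x',y')}{|(x,y)-(x',y')|}\,dx'dy'$ is quasi normal. (3) If $\rho$ is a smooth function on $\mathbb{R}^{2}$ with compact support and $\rho\neq 0$, then $f(x,y)=\int_{\mathbb{R}^{2}}\frac{\rho(x',y')}{|(x,y)-(x',y')|}\,dx'dy'$ is quasi split normal.
   Context: One-variable notions: a smooth $g:\mathbb{R}\setminus V\to\mathbb{R}$, $V\subset\mathbb{R}$ bounded closed, is analytic at infinity if there exist $\epsilon_{1},\epsilon_{2}>0$ such that $g(1/t)=\sum_{n\geq1}a_{n}t^{n}$ for $0<t<\epsilon_{1}$ and $g(1/t)=\sum_{n\geq1}b_{n}t^{n}$ for $-\epsilon_{2}<t<0$, with real coefficients and both power series absolutely convergent on the respective intervals. Two-variable notions: let $f:\mathbb{R}^{2}\setminus W\to\mathbb{R}$ be smooth with $W$ closed and bounded. $f$ is of very moderate decrease if there is $C>0$ with $|f(x,y)|\leq\frac{C}{|(x,y)|}$ for $|(x,y)|>1$, and of moderate decrease if $|f(x,y)|\leq\frac{C}{|(x,y)|^{2}}$ for $|(x,y)|>1$. For fixed $x$ write $f_{x}(y)=f(x,y)$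 and for fixed $y$ write $f_{y}(x)=f(x,y)$, with derivatives taken in the free variable. $f$ is normal if: (i) for every $x\in\mathbb{R}$, $f_{x}$ is analytic at infinity; (ii) for every $y\in\mathbb{R}$, $f_{y}$ is analytic at infinity; (iii) $f$ is of very moderate decrease; (iv) $\frac{\partial f}{\partial x}$ and $\frac{\partial f}{\partial y}$ are of moderate decrease; (v) there is a uniform bound (independent of $x$, $y$) on the number of zeros of $f_{x},(f_{x})',(f_{x})''$ and of $f_{y},(f_{y})',(f_{y})''$. $f$ is quasi normal if (i)–(iv) hold and (v)': for sufficiently large $x$, the zeros of $f_{x}$ are contained in a union $(-M_{x},-N_{x})\cup(N_{x},M_{x})$ of bounded intervals with $M_{x}-N_{x}$ uniformly bounded in $x$, and similarly for $(f_{x})'$, $(f_{x})''$ (with their own $M'_{x},N'_{x},M''_{x},N''_{x}$), and for $f_{y},(f_{y})',(f_{y})''$ with sufficiently large $y$. $f$ is quasi split normal if (i)–(iv) hold and (v)'': for sufficiently large $(x,y)$, $f=f_{1}+f_{2}$ with $f_{1},f_{2}$ quasi normal and $f,f_{1},f_{2}$ smooth. *)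

theory Defs
  imports "HOL-Analysis.Analysis"
begin

text \<open>Functions of two variables are total functions on real \<times> real (whose norm is the
Euclidean norm); only their values off the exceptional set W matter.\<close>

definition pd :: "bool \<Rightarrow> (real \<times> real \<Rightarrow> real) \<Rightarrow> (real \<times> real \<Rightarrow> real)" where
  "pd d g = (if d then (\<lambda>(x,y). deriv (\<lambda>t. g (t,y)) x) else (\<lambda>(x,y). deriv (\<lambda>t. g (x,t)) y))"

abbreviation dx where "dx \<equiv> pd True"
abbreviation dy where "dy \<equiv> pd False"

fun pderivs :: "bool list \<Rightarrow> (real \<times> real \<Rightarrow> real) \<Rightarrow> (real \<times> real \<Rightarrow> real)" where
  "pderivs [] f = f"
| "pderivs (d # ds) f = pd d (pderivs ds f)"

definition smooth_on :: "(real \<times> real) set \<Rightarrow> (real \<times> real \<Rightarrow> real) \<Rightarrow> bool" where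
  "smooth_on S f \<longleftrightarrow> open S \<and> (\<forall>ds. pderivs ds f differentiable_on S)"

definition analytic_at_infinity :: "real set \<Rightarrow> (real \<Rightarrow> real) \<Rightarrow> bool" where
  "analytic_at_infinity V g \<longleftrightarrow>
     (\<exists>e1 e2 (a::nat \<Rightarrow> real) (b::nat \<Rightarrow> real). e1 > 0 \<and> e2 > 0 \<and>
        (\<forall>t. 0 < t \<and> t < e1 \<and> 1/t \<notin> V \<longrightarrow>
            summable (\<lambda>n. \<bar>a n * t ^ (Suc n)\<bar>) \<and> (\<lambda>n. a n * t ^ (Suc n)) sums g (1/t)) \<and>
        (\<forall>t. -e2 < t \<and> t < 0 \<and> 1/t \<notin> V \<longrightarrow>
            summable (\<lambda>n. \<bar>b n * t ^ (Suc n)\<bar>) \<and> (\<lambda>n. b n * t ^ (Suc n)) sums g (1/t)))"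

definition very_moderate_decrease :: "(real \<times> real) set \<Rightarrow> (real \<times> real \<Rightarrow> real) \<Rightarrow> bool" where
  "very_moderate_decrease W f \<longleftrightarrow>
     (\<exists>C>0. \<forall>p. p \<notin> W \<and> norm p > 1 \<longrightarrow> \<bar>f p\<bar> \<le> C / norm p)"

definition moderate_decrease :: "(real \<times> real) set \<Rightarrow> (real \<times> real \<Rightarrow> real) \<Rightarrow> bool" where
  "moderate_decrease W f \<longleftrightarrow>
     (\<exists>C>0. \<forall>p. p \<notin> W \<and> norm p > 1 \<longrightarrow> \<bar>f p\<bar> \<le> C / (norm p)\<^sup>2)"

text \<open>Zero sets of f_x, (f_x)', (f_x)'' (k = 0,1,2) and of f_y, (f_y)', (f_y)''.\<close>
definition zeros_x :: "(real \<times> real) set \<Rightarrow> (real \<times> real \<Rightarrow> real) \<Rightarrow> nat \<Rightarrow> real \<Rightarrow> real set" where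
  "zeros_x W f k x = {y. (x,y) \<notin> W \<and> ((deriv ^^ k) (\<lambda>t. f (x,t))) y = 0}"

definition zeros_y :: "(real \<times> real) set \<Rightarrow> (real \<times> real \<Rightarrow> real) \<Rightarrow> nat \<Rightarrow> real \<Rightarrow> real set" where
  "zeros_y W f k y = {x. (x,y) \<notin> W \<and> ((deriv ^^ k) (\<lambda>t. f (t,y))) x = 0}"

definition basic_conditions :: "(real \<times> real) set \<Rightarrow> (real \<times> real \<Rightarrow> real) \<Rightarrow> bool" where
  "basic_conditions W f \<longleftrightarrow>
     closed W \<and> bounded W \<and> smooth_on (- W) f \<and>
     (\<forall>x. analytic_at_infinity {y. (x,y) \<in> W} (\<lambda>y. f (x,y))) \<and>
     (\<forall>y. analytic_at_infinity {x. (x,y) \<in> W} (\<lambda>x. f (x,y))) \<and>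
     very_moderate_decrease W f \<and>
     moderate_decrease W (dx f) \<and> moderate_decrease W (dy f)"

definition normal :: "(real \<times> real) set \<Rightarrow> (real \<times> real \<Rightarrow> real) \<Rightarrow> bool" where
  "normal W f \<longleftrightarrow> basic_conditions W f \<and>
     (\<exists>N::nat. \<forall>k\<le>2. \<forall>c.
        finite (zeros_x W f k c) \<and> card (zeros_x W f k c) \<le> N \<and>
        finite (zeros_y W f k c) \<and> card (zeros_y W f k c) \<le> N)"

definition quasi_normal :: "(real \<times> real) set \<Rightarrow> (real \<times> real \<Rightarrow> real) \<Rightarrow> bool" where
  "quasi_normal W f \<longleftrightarrow> basic_conditions W f \<and>
     (\<exists>R K. \<forall>k\<le>2. \<forall>c. \<bar>c\<bar> > R \<longrightarrow>
        (\<exists>M N::real. M - N \<le> K \<and> zeros_x W f k c \<subseteq> {-M<..<-N} \<union> {N<..<M}) \<and>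
        (\<exists>M N::real. M - N \<le> K \<and> zeros_y W f k c \<subseteq> {-M<..<-N} \<union> {N<..<M}))"

definition quasi_split_normal :: "(real \<times> real) set \<Rightarrow> (real \<times> real \<Rightarrow> real) \<Rightarrow> bool" where
  "quasi_split_normal W f \<longleftrightarrow> basic_conditions W f \<and>
     (\<exists>R f1 f2 W1 W2. quasi_normal W1 f1 \<and> quasi_normal W2 f2 \<and>
        (\<forall>p. norm p > R \<longrightarrow> f p = f1 p + f2 p))"

definition potential :: "(real \<times> real \<Rightarrow> real) \<Rightarrow> real \<times> real \<Rightarrow> real" where
  "potential \<rho> p = integral UNIV (\<lambda>q. \<rho> q / dist p q)"

end

theory Submission
  imports Defs "HOL-Complex_Analysis.Cauchy_Integral_Formula"
begin

text \<open>
All partial derivatives of \<open>p \<mapsto> 1 / |p - q|\<close> are polynomials in the coordinates of \<open>p - q\<close>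
and in \<open>1 / |p - q|\<close>. Computing them symbolically gives the smoothness of the inverse distance
away from \<open>q\<close> and, differentiating under the integral sign, of the potential of \<open>\<rho>\<close> outside a
ball \<open>W\<close> around the support; the decay conditions follow from \<open>|p| \<le> C |p - q|\<close> for \<open>p\<close> outside
\<open>W\<close> and \<open>q\<close> in the support.

On a line parallel to an axis, \<open>1 / |(c, 1/t) - q| = |t| / sqrt (1 - 2 u t + v t\<^sup>2)\<close>, and the
square root extends holomorphically to a disc around \<open>t = 0\<close>; its Taylor series, also after
integrating against \<open>\<rho>\<close>, gives analyticity at infinity.

Along the line at height \<open>c\<close>, the first and second derivatives of the kernel have the signs of
\<open>-(t - u)\<close> and \<open>2 (t - u)\<^sup>2 - (c - w)\<^sup>2\<close>, where \<open>q = (u, w)\<close>. So the inverse distance has at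
most two such zeros per line, and for a density of fixed sign supported in \<open>[-B, B]\<^sup>2\<close> the zeros
of the derivatives of the potential lie in \<open>|t| \<le> B\<close>, resp. in an annulus of width \<open>O(B)\<close> around
\<open>|c| / sqrt 2\<close>. A density of arbitrary sign is the sum of its positive and negative parts.
\<close>

section \<open>Coordinates and partial derivatives along axis-parallel lines\<close>

text \<open>As in \<open>pd\<close>, the Boolean \<open>True\<close> selects the \<open>x\<close>-coordinate.\<close>

definition coord :: "bool \<Rightarrow> real \<times> real \<Rightarrow> real" where
  "coord d p = (if d then fst p else snd p)"

definition axis_line :: "bool \<Rightarrow> real \<Rightarrow> real \<Rightarrow> real \<times> real" where
  "axis_line d c t = (if d then (t, c) else (c, t))"

lemma coord_axis_line [simp]:
  "coord d (axis_line d c t) = t" "coord (\<not> d) (axis_line d c t) = c"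
  by (simp_all add: coord_def axis_line_def)

lemma axis_line_coord: "axis_line d (coord (\<not> d) p) (coord d p) = p"
  by (simp add: coord_def axis_line_def)

lemma abs_coord_le_norm: "\<bar>coord d p\<bar> \<le> norm p"
  by (cases p) (simp add: coord_def norm_Pair real_sqrt_ge_abs1 real_sqrt_ge_abs2)

lemma abs_coord_diff_le_dist: "\<bar>coord d p - coord d q\<bar> \<le> dist p q"
  by (cases d) (auto simp: coord_def dist_real_def[symmetric] dist_fst_le dist_snd_le)

lemma dist_sq_coord: "dist p q ^ 2 = (coord d p - coord d q)^2 + (coord (\<not> d) p - coord (\<not> d) q)^2"
  by (cases p; cases q; cases d) (simp_all add: coord_def dist_Pair_Pair dist_real_def)

lemma continuous_on_coord [continuous_intros]:
  "continuous_on A f \<Longrightarrow> continuous_on A (\<lambda>x. coord d (f x))"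
  by (cases d) (auto simp: coord_def intro: continuous_intros)

lemma has_derivative_axis_line: "(axis_line d c has_derivative axis_line d 0) (at t)"
  unfolding axis_line_def[abs_def] by (cases d) (auto intro!: derivative_eq_intros)

lemma continuous_on_axis_line: "continuous_on A (axis_line d c)"
  by (cases d) (auto simp: axis_line_def intro!: continuous_intros)

lemma has_field_derivative_along_axis_line:
  fixes F :: "real \<times> real \<Rightarrow> real"
  assumes "(F has_derivative (\<lambda>h. fst h * A + snd h * B)) (at (axis_line d c t))"
  shows "((\<lambda>s. F (axis_line d c s)) has_field_derivative (if d then A else B)) (at t)"
  using has_derivative_compose[OF has_derivative_axis_line assms]
  by (cases d) (simp_all add: axis_line_def has_field_derivative_def mult_commute_abs)

lemma pd_eq_deriv_axis_line: "pd d f p = deriv (\<lambda>s. f (axis_line d (coord (\<not> d) p) s)) (coord d p)"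
  by (cases p) (simp add: pd_def coord_def axis_line_def)

lemma funpow_deriv_axis_line:
  "(deriv ^^ k) (\<lambda>s. f (axis_line d c s)) t = pderivs (replicate k d) f (axis_line d c t)"
proof (induction k arbitrary: t)
  case (Suc k)
  then have "(deriv ^^ k) (\<lambda>s. f (axis_line d c s)) = (\<lambda>s. pderivs (replicate k d) f (axis_line d c s))"
    by blast
  then show ?case by (simp add: pd_eq_deriv_axis_line)
qed simp

definition axis_zeros :: "(real \<times> real) set \<Rightarrow> (real \<times> real \<Rightarrow> real) \<Rightarrow> bool \<Rightarrow> nat \<Rightarrow> real \<Rightarrow> real set" where
  "axis_zeros W f d k c = {t. axis_line d c t \<notin> W \<and> pderivs (replicate k d) f (axis_line d c t) = 0}"

lemma zeros_x_eq_axis_zeros: "zeros_x W f k c = axis_zeros W f False k c"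
  using funpow_deriv_axis_line[of k f False c]
  by (simp add: zeros_x_def axis_zeros_def axis_line_def)

lemma zeros_y_eq_axis_zeros: "zeros_y W f k c = axis_zeros W f True k c"
  using funpow_deriv_axis_line[of k f True c]
  by (simp add: zeros_y_def axis_zeros_def axis_line_def)

lemma pderivs_family:
  fixes \<Phi> :: "'e \<Rightarrow> real \<times> real \<Rightarrow> real" and D :: "bool \<Rightarrow> 'e \<Rightarrow> 'e"
  assumes "open S"
    and \<Phi>_deriv: "\<And>e p. p \<in> S \<Longrightarrow>
      (\<Phi> e has_derivative (\<lambda>h. fst h * \<Phi> (D True e) p + snd h * \<Phi> (D False e) p)) (at p)"
  shows "p \<in> S \<Longrightarrow> pderivs ds (\<Phi> e) p = \<Phi> (foldr D ds e) p"
proof (induction ds arbitrary: p)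
  case (Cons d ds)
  define c where "c = coord (\<not> d) p"
  define e' where "e' = foldr D ds e"
  have p: "p = axis_line d c (coord d p)"
    by (simp add: c_def axis_line_coord)
  have "(\<Phi> e' has_derivative (\<lambda>h. fst h * \<Phi> (D True e') p + snd h * \<Phi> (D False e') p))
      (at (axis_line d c (coord d p)))"
    using \<Phi>_deriv[OF Cons.prems] p by simp
  from has_field_derivative_along_axis_line[OF this]
  have "((\<lambda>s. \<Phi> e' (axis_line d c s)) has_field_derivative \<Phi> (D d e') p) (at (coord d p))"
    by (cases d) simp_all
  moreover have "open {s. axis_line d c s \<in> S}"
    using open_vimage[OF \<open>open S\<close> continuous_on_axis_line] by (simp add: vimage_def)
  ultimately have "((\<lambda>s. pderivs ds (\<Phi> e) (axis_line d c s)) has_field_derivative \<Phi> (D d e') p)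
      (at (coord d p))"
    by (rule has_field_derivative_transform_within_open) (use Cons p in \<open>auto simp: e'_def\<close>)
  then show ?case
    by (simp add: pd_eq_deriv_axis_line DERIV_imp_deriv c_def e'_def)
qed simp

lemma smooth_on_family:
  fixes \<Phi> :: "'e \<Rightarrow> real \<times> real \<Rightarrow> real" and D :: "bool \<Rightarrow> 'e \<Rightarrow> 'e"
  assumes "open S"
    and \<Phi>_deriv: "\<And>e p. p \<in> S \<Longrightarrow>
      (\<Phi> e has_derivative (\<lambda>h. fst h * \<Phi> (D True e) p + snd h * \<Phi> (D False e) p)) (at p)"
  shows "smooth_on S (\<Phi> e)"
  unfolding smooth_on_def differentiable_on_def
proof (intro conjI allI ballI \<open>open S\<close>)
  fix ds p assume "p \<in> S"
  have "(pderivs ds (\<Phi> e) has_derivative (\<lambda>h. fst h * \<Phi> (D True (foldr D ds e)) p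
      + snd h * \<Phi> (D False (foldr D ds e)) p)) (at p)"
    by (rule has_derivative_transform_within_open[OF \<Phi>_deriv[OF \<open>p \<in> S\<close>] \<open>open S\<close> \<open>p \<in> S\<close>])
       (simp add: pderivs_family[OF assms])
  then show "pderivs ds (\<Phi> e) differentiable at p within S"
    using differentiable_def has_derivative_at_withinI by blast
qed

section \<open>The kernel \<open>1 / |p - q|\<close> and its derivatives\<close>

text \<open>Polynomials in the coordinates of \<open>p - q\<close> and in \<open>1 / |p - q|\<close>: a class of functions closed
under differentiation in \<open>p\<close>.\<close>

datatype kernel_term =
  KConst real | KCoord bool | KInv | KAdd kernel_term kernel_term | KMult kernel_term kernel_term

fun kernel_eval :: "kernel_term \<Rightarrow> real \<times> real \<Rightarrow> real \<times> real \<Rightarrow> real" where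
  "kernel_eval (KConst a) p q = a"
| "kernel_eval (KCoord d) p q = coord d p - coord d q"
| "kernel_eval KInv p q = 1 / dist p q"
| "kernel_eval (KAdd e e') p q = kernel_eval e p q + kernel_eval e' p q"
| "kernel_eval (KMult e e') p q = kernel_eval e p q * kernel_eval e' p q"

fun kernel_diff :: "bool \<Rightarrow> kernel_term \<Rightarrow> kernel_term" where
  "kernel_diff d (KConst a) = KConst 0"
| "kernel_diff d (KCoord d') = KConst (if d = d' then 1 else 0)"
| "kernel_diff d KInv = KMult (KConst (-1)) (KMult (KCoord d) (KMult KInv (KMult KInv KInv)))"
| "kernel_diff d (KAdd e e') = KAdd (kernel_diff d e) (kernel_diff d e')"
| "kernel_diff d (KMult e e') = KAdd (KMult (kernel_diff d e) e') (KMult e (kernel_diff d e'))"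

lemma has_derivative_inverse_dist:
  assumes "p \<noteq> q"
  shows "((\<lambda>p. 1 / dist p q) has_derivative
    (\<lambda>h. - (fst h * (fst p - fst q) + snd h * (snd p - snd q)) / dist p q ^ 3)) (at p)"
proof -
  have n: "norm (p - q) \<noteq> 0" using assms by simp
  have "((\<lambda>p. inverse (norm (p - q))) has_derivative
      (\<lambda>h. - (inverse (norm (p - q)) * (h \<bullet> sgn (p - q)) * inverse (norm (p - q))))) (at p)"
    using assms
    by (auto intro!: derivative_eq_intros
        has_derivative_norm[THEN has_derivative_compose[of _ _ _ _ norm, rotated]] simp: n)
  moreover have "(\<lambda>h. - (inverse (norm (p - q)) * (h \<bullet> sgn (p - q)) * inverse (norm (p - q))))
      = (\<lambda>h. - (fst h * (fst p - fst q) + snd h * (snd p - snd q)) / dist p q ^ 3)"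
    using n by (auto simp: fun_eq_iff sgn_div_norm inner_prod_def dist_norm power3_eq_cube field_simps)
  ultimately show ?thesis by (simp add: dist_norm divide_inverse)
qed

lemma has_derivative_kernel_eval:
  assumes "p \<noteq> q"
  shows "((\<lambda>p. kernel_eval e p q) has_derivative (\<lambda>h. fst h * kernel_eval (kernel_diff True e) p q
    + snd h * kernel_eval (kernel_diff False e) p q)) (at p)"
proof (induction e)
  case (KCoord d)
  then show ?case by (cases d) (auto simp: coord_def intro!: derivative_eq_intros)
next
  case KInv
  have "dist p q \<noteq> 0" using assms by simp
  show ?case
    unfolding kernel_eval.simps(3)
    by (rule has_derivative_eq_rhs[OF has_derivative_inverse_dist[OF assms]])
       (use \<open>dist p q \<noteq> 0\<close> in \<open>auto simp: fun_eq_iff coord_def power3_eq_cube field_simps\<close>)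
qed (auto simp: algebra_simps intro!: derivative_eq_intros)

lemma continuous_on_kernel_eval:
  "continuous_on {z. fst z \<noteq> snd z} (\<lambda>z. kernel_eval e (fst z) (snd z))"
  by (induction e) (auto intro!: continuous_intros)

lemma kernel_eval_diff_KInv:
  "kernel_eval (kernel_diff d KInv) p q = - (coord d p - coord d q) / dist p q ^ 3"
  by (simp add: power3_eq_cube)

lemma kernel_eval_diff_diff_KInv:
  assumes "p \<noteq> q"
  shows "kernel_eval (kernel_diff d (kernel_diff d KInv)) p q
    = (2 * (coord d p - coord d q)^2 - (coord (\<not> d) p - coord (\<not> d) q)^2) / dist p q ^ 5"
proof -
  define x where "x = coord d p - coord d q"
  define i where "i = 1 / dist p q"
  have "kernel_eval (kernel_diff d (kernel_diff d KInv)) p q = 3 * x^2 * i^5 - i^3"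
    by (simp add: x_def[symmetric] i_def[symmetric]) algebra
  also have "\<dots> = (3 * x^2 - dist p q ^ 2) / dist p q ^ 5"
    using assms by (simp add: i_def field_simps)
  finally show ?thesis
    by (simp add: x_def dist_sq_coord[of p q d])
qed

lemma abs_kernel_eval_diff_KInv_le: "\<bar>kernel_eval (kernel_diff d KInv) p q\<bar> \<le> 1 / dist p q ^ 2"
proof (cases "p = q")
  case False
  have "\<bar>kernel_eval (kernel_diff d KInv) p q\<bar> = \<bar>coord d p - coord d q\<bar> / dist p q ^ 3"
    by (simp add: kernel_eval_diff_KInv abs_divide abs_minus_commute power3_eq_cube)
  also have "\<dots> \<le> dist p q / dist p q ^ 3"
    by (intro divide_right_mono abs_coord_diff_le_dist) auto
  also have "\<dots> = 1 / dist p q ^ 2"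
    using False by (simp add: power3_eq_cube power2_eq_square)
  finally show ?thesis .
qed simp

lemma norm_le_mult_dist:
  assumes "norm q \<le> r" "0 < \<delta>" "\<delta> \<le> dist p q"
  shows "norm p \<le> (1 + r / \<delta>) * dist p q"
proof -
  have "norm p \<le> dist p q + norm q"
    using norm_triangle_ineq[of "p - q" q] by (simp add: dist_norm)
  moreover have "0 \<le> r"
    using assms(1) norm_ge_zero[of q] by linarith
  then have "r * \<delta> \<le> r * dist p q"
    using assms(3) by (rule mult_left_mono[rotated])
  then have "r \<le> r / \<delta> * dist p q"
    using assms(2) by (simp add: field_simps)
  ultimately show ?thesis using assms(1) by (simp add: algebra_simps)
qed

lemma inverse_dist_power_le:
  assumes "norm q \<le> r" "0 < \<delta>" "\<delta> \<le> dist p q" "0 < norm p"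
  shows "1 / dist p q ^ n \<le> (1 + r / \<delta>) ^ n / norm p ^ n"
proof -
  have "norm p ^ n \<le> (1 + r / \<delta>) ^ n * dist p q ^ n"
    unfolding power_mult_distrib[symmetric] by (intro power_mono norm_le_mult_dist assms) simp
  moreover have "0 < dist p q"
    using assms(2,3) by linarith
  ultimately show ?thesis
    using assms(4) by (simp add: field_simps)
qed

section \<open>Analyticity at infinity\<close>

lemma analytic_at_infinity_of_abs_mult_power_series:
  fixes g h :: "real \<Rightarrow> real"
  assumes "e > 0"
    and c: "\<And>t. \<bar>t\<bar> < e \<Longrightarrow> summable (\<lambda>n. \<bar>c n * t^n\<bar>) \<and> (\<lambda>n. c n * t^n) sums h t"
    and g: "\<And>t. t \<noteq> 0 \<Longrightarrow> \<bar>t\<bar> < e \<Longrightarrow> g (1/t) = \<bar>t\<bar> * h t"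
  shows "analytic_at_infinity V g"
proof -
  have series: "summable (\<lambda>n. \<bar>\<sigma> * c n * t ^ Suc n\<bar>) \<and> (\<lambda>n. \<sigma> * c n * t ^ Suc n) sums g (1/t)"
    if "\<sigma> = 1 \<or> \<sigma> = -1" "\<sigma> * t > 0" "\<bar>t\<bar> < e" for \<sigma> t
  proof
    have ct: "summable (\<lambda>n. \<bar>c n * t^n\<bar>)" "(\<lambda>n. c n * t^n) sums h t"
      using c[OF \<open>\<bar>t\<bar> < e\<close>] by auto
    have "\<bar>t\<bar> = \<sigma> * t"
      using that(1,2) by auto
    then have eq: "\<sigma> * c n * t ^ Suc n = \<bar>t\<bar> * (c n * t^n)" for n
      by simp
    have "\<bar>\<sigma> * c n * t ^ Suc n\<bar> = \<bar>t\<bar> * \<bar>c n * t^n\<bar>" for n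
      using that(1) by (auto simp: abs_mult)
    then show "summable (\<lambda>n. \<bar>\<sigma> * c n * t ^ Suc n\<bar>)"
      using summable_mult[OF ct(1), of "\<bar>t\<bar>"] by simp
    show "(\<lambda>n. \<sigma> * c n * t ^ Suc n) sums g (1/t)"
      unfolding eq using sums_mult[OF ct(2), of "\<bar>t\<bar>"] g[of t] that by auto
  qed
  show ?thesis
    unfolding analytic_at_infinity_def
    using \<open>e > 0\<close> series[of 1] series[of "-1"]
    by (intro exI[of _ e] exI[of _ c] exI[of _ "\<lambda>n. - c n"]) auto
qed

lemma analytic_at_infinity_of_holomorphic:
  fixes H :: "complex \<Rightarrow> complex" and g h :: "real \<Rightarrow> real"
  assumes "H holomorphic_on ball 0 r" "r > 0"
    and H_real: "\<And>t. \<bar>t\<bar> < r \<Longrightarrow> H (of_real t) = of_real (h t)"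
    and g: "\<And>t. t \<noteq> 0 \<Longrightarrow> \<bar>t\<bar> < r \<Longrightarrow> g (1/t) = \<bar>t\<bar> * h t"
  shows "analytic_at_infinity V g"
proof -
  define C where "C n = (deriv ^^ n) H 0 / fact n" for n
  have C: "(\<lambda>n. C n * w^n) sums H w" if "w \<in> ball 0 r" for w
    using holomorphic_power_series[OF assms(1) that] by (simp add: C_def)
  have summable_C: "summable (\<lambda>n. C n * (of_real (3*r/4))^n)"
    using C[of "of_real (3*r/4)"] \<open>r > 0\<close> by (auto simp: sums_iff)
  have series: "summable (\<lambda>n. \<bar>Re (C n) * t^n\<bar>) \<and> (\<lambda>n. Re (C n) * t^n) sums h t"
    if t: "\<bar>t\<bar> < r/2" for t
  proof
    have "summable (\<lambda>n. norm (C n * (of_real t)^n))"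
      by (rule powser_insidea[OF summable_C]) (use t in auto)
    then show "summable (\<lambda>n. \<bar>Re (C n) * t^n\<bar>)"
    proof (rule summable_comparison_test'[where N=0])
      fix n
      have "\<bar>Re (C n)\<bar> * \<bar>t\<bar>^n \<le> norm (C n) * \<bar>t\<bar>^n"
        by (intro mult_right_mono abs_Re_le_cmod) auto
      then show "norm \<bar>Re (C n) * t^n\<bar> \<le> norm (C n * (of_real t)^n)"
        by (simp add: abs_mult power_abs norm_mult norm_power)
    qed
    have "(\<lambda>n. Re (C n * (of_real t)^n)) sums Re (H (of_real t))"
      by (rule sums_Re[OF C]) (use t in auto)
    then show "(\<lambda>n. Re (C n) * t^n) sums h t"
      using H_real[of t] t by (simp flip: of_real_power)
  qed
  show ?thesis
  proof (rule analytic_at_infinity_of_abs_mult_power_series[where e = "r/2", OF _ series])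
    show "r/2 > 0" using \<open>r > 0\<close> by simp
    fix t :: real assume "t \<noteq> 0" "\<bar>t\<bar> < r/2"
    then show "g (1/t) = \<bar>t\<bar> * h t" using g[of t] by linarith
  qed
qed

lemma inverse_dist_axis_line_reciprocal:
  assumes "t \<noteq> 0"
  shows "1 / dist (axis_line d c (1/t)) q
    = \<bar>t\<bar> / sqrt (1 - 2 * coord d q * t + dist q (axis_line d c 0) ^ 2 * t^2)"
proof -
  have a: "dist (axis_line d c (1/t)) q ^ 2 = (1/t - coord d q)^2 + (c - coord (\<not> d) q)^2"
    using dist_sq_coord[of "axis_line d c (1/t)" q d] by simp
  have b: "dist q (axis_line d c 0) ^ 2 = coord d q ^ 2 + (c - coord (\<not> d) q)^2"
    using dist_sq_coord[of q "axis_line d c 0" d] by (simp add: power2_commute)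
  have "1 - 2 * coord d q * t + dist q (axis_line d c 0) ^ 2 * t^2
      = (t * dist (axis_line d c (1/t)) q)^2"
    unfolding power_mult_distrib a b using assms by (simp add: field_simps power2_eq_square)
  then show ?thesis
    using assms by (simp add: real_sqrt_abs abs_mult)
qed

text \<open>By the previous lemma, \<open>t\<^sup>2 |axis_line d c (1/t) - q|\<^sup>2 = dist_quad u v t\<close> for
\<open>u = coord d q\<close> and \<open>v = |q - axis_line d c 0|\<^sup>2\<close>. Near \<open>0\<close> it stays in the right half-plane,
where the square root is holomorphic.\<close>

definition dist_quad :: "real \<Rightarrow> real \<Rightarrow> complex \<Rightarrow> complex" where
  "dist_quad u v z = 1 - 2 * of_real u * z + of_real v * z^2"

lemma Re_dist_quad_pos:
  assumes "\<bar>u\<bar> \<le> K" "\<bar>v\<bar> \<le> K" "norm z < 1 / (3*K + 1)"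
  shows "0 < Re (dist_quad u v z)"
proof -
  have "0 \<le> K"
    using assms(1) by linarith
  then have "1 / (3*K + 1) \<le> 1"
    by simp
  then have "norm z < 1"
    using assms(3) by linarith
  have "dist_quad u v z - 1 = of_real v * z^2 - 2 * of_real u * z"
    by (simp add: dist_quad_def)
  then have "norm (dist_quad u v z - 1) \<le> 2 * \<bar>u\<bar> * norm z + \<bar>v\<bar> * norm z ^ 2"
    using norm_triangle_ineq4[of "of_real v * z^2" "2 * of_real u * z"]
    by (simp add: norm_mult norm_power)
  also have "\<dots> \<le> 2 * K * norm z + K * norm z"
  proof -
    have "norm z ^ 2 \<le> norm z"
      using \<open>norm z < 1\<close> by (simp add: power2_eq_square mult_left_le_one_le)
    then have "\<bar>v\<bar> * norm z ^ 2 \<le> K * norm z"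
      using assms(2) by (intro mult_mono) auto
    moreover have "2 * \<bar>u\<bar> * norm z \<le> 2 * K * norm z"
      using assms(1) by (simp add: mult_right_mono)
    ultimately show ?thesis by linarith
  qed
  also have "\<dots> < 1"
  proof -
    have "3 * K * norm z + norm z < 1"
      using assms(3) \<open>0 \<le> K\<close> by (simp add: field_simps)
    then show ?thesis using norm_ge_zero[of z] by linarith
  qed
  finally show ?thesis
    using abs_Re_le_cmod[of "dist_quad u v z - 1"] by simp
qed

lemma dist_quad_of_real_pos:
  assumes "\<bar>u\<bar> \<le> K" "\<bar>v\<bar> \<le> K" "\<bar>t\<bar> < 1 / (3*K + 1)"
  shows "0 < 1 - 2 * u * t + v * t^2"
    and "1 / csqrt (dist_quad u v (of_real t)) = of_real (1 / sqrt (1 - 2 * u * t + v * t^2))"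
proof -
  have "dist_quad u v (of_real t) = of_real (1 - 2 * u * t + v * t^2)"
    by (simp add: dist_quad_def)
  moreover have "0 < Re (dist_quad u v (of_real t))"
    using Re_dist_quad_pos[OF assms(1,2)] assms(3) by simp
  ultimately show "0 < 1 - 2 * u * t + v * t^2"
    and "1 / csqrt (dist_quad u v (of_real t)) = of_real (1 / sqrt (1 - 2 * u * t + v * t^2))"
    by (simp_all add: csqrt_of_real)
qed

lemma has_field_derivative_inverse_csqrt_dist_quad:
  assumes "0 < Re (dist_quad u v z)"
  shows "((\<lambda>z. 1 / csqrt (dist_quad u v z)) has_field_derivative
    (of_real u - of_real v * z) / csqrt (dist_quad u v z) ^ 3) (at z within S)"
proof -
  have Q: "(dist_quad u v has_field_derivative (2 * of_real v * z - 2 * of_real u)) (at z within S)"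
    unfolding dist_quad_def[abs_def] by (auto intro!: derivative_eq_intros)
  have "dist_quad u v z \<notin> \<real>\<^sub>\<le>\<^sub>0" "csqrt (dist_quad u v z) \<noteq> 0"
    using assms by (auto simp: complex_nonpos_Reals_iff)
  then show ?thesis
    by (auto intro!: derivative_eq_intros Q simp: field_simps power3_eq_cube)
qed

lemma holomorphic_on_inverse_csqrt_dist_quad:
  assumes "\<bar>u\<bar> \<le> K" "\<bar>v\<bar> \<le> K"
  shows "(\<lambda>z. 1 / csqrt (dist_quad u v z)) holomorphic_on ball 0 (1 / (3*K + 1))"
  unfolding holomorphic_on_def field_differentiable_def
proof
  fix z :: complex assume "z \<in> ball 0 (1 / (3*K + 1))"
  then have "0 < Re (dist_quad u v z)"
    using Re_dist_quad_pos[OF assms] by simp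
  then show "\<exists>f'. ((\<lambda>z. 1 / csqrt (dist_quad u v z)) has_field_derivative f')
      (at z within ball 0 (1 / (3*K + 1)))"
    using has_field_derivative_inverse_csqrt_dist_quad by blast
qed

lemma continuous_on_csqrt_compose:
  "continuous_on S f \<Longrightarrow> (\<And>x. x \<in> S \<Longrightarrow> f x \<notin> \<real>\<^sub>\<le>\<^sub>0) \<Longrightarrow> continuous_on S (\<lambda>x. csqrt (f x))"
  by (rule continuous_on_compose2[OF continuous_on_csqrt]) auto

lemma holomorphic_on_integral_inverse_csqrt_dist_quad:
  fixes \<rho> u v :: "'b::euclidean_space \<Rightarrow> real"
  assumes cont: "continuous_on (cbox a b) \<rho>" "continuous_on (cbox a b) u" "continuous_on (cbox a b) v"
    and bound: "\<And>q. q \<in> cbox a b \<Longrightarrow> \<bar>u q\<bar> \<le> K \<and> \<bar>v q\<bar> \<le> K"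
  shows "(\<lambda>z. integral (cbox a b) (\<lambda>q. of_real (\<rho> q) / csqrt (dist_quad (u q) (v q) z)))
    holomorphic_on ball 0 (1 / (3*K + 1))"
proof -
  let ?U = "ball (0::complex) (1 / (3*K + 1))"
  let ?Q = "\<lambda>z q. dist_quad (u q) (v q) z"
  have Re_pos: "0 < Re (?Q z q)" if "norm z < 1 / (3*K + 1)" "q \<in> cbox a b" for z q
    using Re_dist_quad_pos[of "u q" K "v q" z] bound[OF that(2)] that(1) by simp
  have Q_ok: "?Q z q \<notin> \<real>\<^sub>\<le>\<^sub>0" "?Q z q \<noteq> 0" if "norm z < 1 / (3*K + 1)" "q \<in> cbox a b" for z q
    using Re_pos[OF that] by (auto simp: complex_nonpos_Reals_iff)
  have cont_snd: "continuous_on (?U \<times> cbox a b) (\<lambda>x. w (snd x))" if "continuous_on (cbox a b) w" for w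
    by (rule continuous_on_compose2[OF that continuous_on_snd]) auto
  have cont_Q: "continuous_on (?U \<times> cbox a b) (\<lambda>x. ?Q (fst x) (snd x))"
    unfolding dist_quad_def by (intro continuous_intros cont_snd cont)
  have cont_sqrt: "continuous_on (?U \<times> cbox a b) (\<lambda>x. csqrt (?Q (fst x) (snd x)))"
    by (rule continuous_on_csqrt_compose[OF cont_Q]) (auto simp: Q_ok)
  have deriv: "((\<lambda>z. of_real (\<rho> q) / csqrt (?Q z q)) has_field_derivative
      of_real (\<rho> q) * ((of_real (u q) - of_real (v q) * z) / csqrt (?Q z q) ^ 3)) (at z within ?U)"
    if "z \<in> ?U" "q \<in> cbox a b" for z q
    using DERIV_cmult[OF has_field_derivative_inverse_csqrt_dist_quad[OF Re_pos[OF _ that(2)]],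
        of z "of_real (\<rho> q)"] that(1)
    by simp
  have integrable: "(\<lambda>q. of_real (\<rho> q) / csqrt (?Q z q)) integrable_on cbox a b" if "z \<in> ?U" for z
  proof (rule integrable_continuous)
    show "continuous_on (cbox a b) (\<lambda>q. of_real (\<rho> q) / csqrt (?Q z q))"
      unfolding dist_quad_def
      by (intro continuous_intros cont continuous_on_csqrt_compose)
         (use that in \<open>auto simp: Q_ok[unfolded dist_quad_def]\<close>)
  qed
  have "continuous_on (?U \<times> cbox a b)
      (\<lambda>(z, q). of_real (\<rho> q) * ((of_real (u q) - of_real (v q) * z) / csqrt (?Q z q) ^ 3))"
    unfolding split_beta
    by (intro continuous_intros cont_snd cont cont_Q cont_sqrt) (auto simp: Q_ok)
  from leibniz_rule_holomorphic[OF deriv integrable this] show ?thesis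
    by simp
qed

section \<open>The inverse distance outside a ball\<close>

lemma finite_card_le_2_if_subset:
  assumes "A \<subseteq> {x, y}"
  shows "finite A \<and> card A \<le> 2"
proof
  show "finite A"
    using assms by (rule finite_subset) simp
  have "card A \<le> card {x, y}"
    using assms by (rule card_mono[rotated]) simp
  also have "\<dots> \<le> 2"
    by (simp add: card_insert_if)
  finally show "card A \<le> 2" .
qed

lemma pderivs_inverse_dist:
  assumes "open S" "q \<notin> S" "p \<in> S"
  shows "pderivs ds (\<lambda>p. 1 / dist p q) p = kernel_eval (foldr kernel_diff ds KInv) p q"
  unfolding kernel_eval.simps(3)[symmetric]
  using assms by (intro pderivs_family[of S "\<lambda>e p. kernel_eval e p q"] has_derivative_kernel_eval) auto

lemma smooth_on_inverse_dist:
  assumes "open S" "q \<notin> S"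
  shows "smooth_on S (\<lambda>p. 1 / dist p q)"
  unfolding kernel_eval.simps(3)[symmetric]
  using assms by (intro smooth_on_family[of S "\<lambda>e p. kernel_eval e p q" kernel_diff] has_derivative_kernel_eval) auto

lemma mem_pair_if_sq_eq: "(t - u)^2 = r \<Longrightarrow> t \<in> {u + sqrt r, u - sqrt (r::real)}"
  using real_sqrt_abs[of "t - u"] by (cases "u \<le> t") auto

lemma axis_zeros_inverse_dist_eq:
  assumes "s > 0"
  shows "axis_zeros (cball q s) (\<lambda>p. 1 / dist p q) d k c = {t. s < dist (axis_line d c t) q
    \<and> kernel_eval ((kernel_diff d ^^ k) KInv) (axis_line d c t) q = 0}"
  unfolding axis_zeros_def
proof (intro Collect_cong)
  fix t
  have "axis_line d c t \<notin> cball q s \<Longrightarrow> pderivs (replicate k d) (\<lambda>p. 1 / dist p q) (axis_line d c t)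
      = kernel_eval ((kernel_diff d ^^ k) KInv) (axis_line d c t) q"
    using pderivs_inverse_dist[of "- cball q s" q "axis_line d c t" "replicate k d"] assms
    by (simp add: open_Compl)
  then show "(axis_line d c t \<notin> cball q s \<and> pderivs (replicate k d) (\<lambda>p. 1 / dist p q) (axis_line d c t) = 0)
      \<longleftrightarrow> s < dist (axis_line d c t) q \<and> kernel_eval ((kernel_diff d ^^ k) KInv) (axis_line d c t) q = 0"
    by (auto simp: dist_commute)
qed

lemma axis_zeros_inverse_dist_subset_pair:
  assumes "s > 0" "k \<le> 2"
  obtains x y where "axis_zeros (cball q s) (\<lambda>p. 1 / dist p q) d k c \<subseteq> {x, y}"
proof -
  let ?Z = "axis_zeros (cball q s) (\<lambda>p. 1 / dist p q) d k c"
  let ?k = "\<lambda>t. kernel_eval ((kernel_diff d ^^ k) KInv) (axis_line d c t) q"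
  have zero: "?k t = 0" and far: "axis_line d c t \<noteq> q" "0 < dist (axis_line d c t) q" if "t \<in> ?Z" for t
    using that assms(1) by (auto simp: axis_zeros_inverse_dist_eq)
  have "k = 0 \<or> k = 1 \<or> k = 2"
    using assms(2) by auto
  then show thesis
  proof (elim disjE)
    assume "k = 0"
    then have "?Z = {}"
      using zero far(2) by fastforce
    then show thesis
      using that by blast
  next
    assume "k = 1"
    have "- (t - coord d q) / dist (axis_line d c t) q ^ 3 = 0" if "t \<in> ?Z" for t
      using zero[OF that] unfolding \<open>k = 1\<close>
      by (simp only: One_nat_def funpow.simps comp_apply id_apply kernel_eval_diff_KInv coord_axis_line)
    then have "?Z \<subseteq> {coord d q, coord d q}"
      using far(2) by fastforce
    then show thesis
      by (rule that)
  next
    assume "k = 2"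
    have "(t - coord d q)^2 = (c - coord (\<not> d) q)^2 / 2" if "t \<in> ?Z" for t
      using zero[OF that] far(2)[OF that] kernel_eval_diff_diff_KInv[OF far(1)[OF that], of d]
      unfolding \<open>k = 2\<close> numeral_2_eq_2 by simp
    then have "?Z \<subseteq> {coord d q + sqrt ((c - coord (\<not> d) q)^2 / 2), coord d q - sqrt ((c - coord (\<not> d) q)^2 / 2)}"
      using mem_pair_if_sq_eq by blast
    then show thesis
      by (rule that)
  qed
qed

lemma very_moderate_decrease_inverse_dist:
  assumes "s > 0"
  shows "very_moderate_decrease (cball q s) (\<lambda>p. 1 / dist p q)"
  unfolding very_moderate_decrease_def
proof (intro exI[of _ "1 + norm q / s"] conjI allI impI)
  show "0 < 1 + norm q / s"
    using assms by (simp add: add_pos_nonneg)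
  fix p assume p: "p \<notin> cball q s \<and> 1 < norm p"
  then have "s \<le> dist p q" "0 < norm p"
    by (auto simp: dist_commute)
  from inverse_dist_power_le[OF order_refl assms this, of 1]
  show "\<bar>1 / dist p q\<bar> \<le> (1 + norm q / s) / norm p"
    by simp
qed

lemma moderate_decrease_pd_inverse_dist:
  assumes "s > 0"
  shows "moderate_decrease (cball q s) (pd d (\<lambda>p. 1 / dist p q))"
  unfolding moderate_decrease_def
proof (intro exI[of _ "(1 + norm q / s)^2"] conjI allI impI)
  have "0 < 1 + norm q / s"
    using assms by (simp add: add_pos_nonneg)
  then show "0 < (1 + norm q / s)^2"
    by simp
  fix p assume p: "p \<notin> cball q s \<and> 1 < norm p"
  then have "s \<le> dist p q" "0 < norm p"
    by (auto simp: dist_commute)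
  have "pd d (\<lambda>p. 1 / dist p q) p = kernel_eval (kernel_diff d KInv) p q"
    using pderivs_inverse_dist[of "- cball q s" q p "[d]"] p assms by (simp add: open_Compl)
  then have "\<bar>pd d (\<lambda>p. 1 / dist p q) p\<bar> \<le> 1 / dist p q ^ 2"
    using abs_kernel_eval_diff_KInv_le by simp
  also have "\<dots> \<le> (1 + norm q / s)^2 / (norm p)^2"
    using inverse_dist_power_le[OF order_refl assms \<open>s \<le> dist p q\<close> \<open>0 < norm p\<close>, of 2] by simp
  finally show "\<bar>pd d (\<lambda>p. 1 / dist p q) p\<bar> \<le> (1 + norm q / s)^2 / (norm p)^2" .
qed

lemma analytic_at_infinity_inverse_dist:
  "analytic_at_infinity V (\<lambda>t. 1 / dist (axis_line d c t) q)"
proof -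
  define u where "u = coord d q"
  define v where "v = dist q (axis_line d c 0) ^ 2"
  define K where "K = \<bar>u\<bar> + \<bar>v\<bar>"
  have K: "\<bar>u\<bar> \<le> K" "\<bar>v\<bar> \<le> K"
    by (simp_all add: K_def)
  show ?thesis
  proof (rule analytic_at_infinity_of_holomorphic[where h = "\<lambda>t. 1 / sqrt (1 - 2 * u * t + v * t^2)",
        OF holomorphic_on_inverse_csqrt_dist_quad[OF K]])
    show "0 < 1 / (3*K + 1)"
      using K by (simp add: add_nonneg_pos)
    fix t :: real
    assume t: "\<bar>t\<bar> < 1 / (3*K + 1)"
    show "1 / csqrt (dist_quad u v (of_real t)) = of_real (1 / sqrt (1 - 2 * u * t + v * t^2))"
      by (rule dist_quad_of_real_pos(2)[OF K t])
  next
    fix t :: real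
    assume "t \<noteq> 0"
    then show "1 / dist (axis_line d c (1/t)) q = \<bar>t\<bar> * (1 / sqrt (1 - 2 * u * t + v * t^2))"
      by (simp add: inverse_dist_axis_line_reciprocal u_def v_def)
  qed
qed

lemma normal_inverse_dist:
  assumes "s > 0"
  shows "normal (cball q s) (\<lambda>p. 1 / dist p q)"
  unfolding normal_def basic_conditions_def
proof (intro conjI allI exI[of _ 2] impI)
  show "smooth_on (- cball q s) (\<lambda>p. 1 / dist p q)"
    using assms by (intro smooth_on_inverse_dist) auto
  show "analytic_at_infinity {y. (x, y) \<in> cball q s} (\<lambda>y. 1 / dist (x, y) q)" for x
    using analytic_at_infinity_inverse_dist[of _ False x q] by (simp add: axis_line_def)
  show "analytic_at_infinity {x. (x, y) \<in> cball q s} (\<lambda>x. 1 / dist (x, y) q)" for y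
    using analytic_at_infinity_inverse_dist[of _ True y q] by (simp add: axis_line_def)
  fix k :: nat and c :: real
  assume "k \<le> 2"
  show "finite (zeros_x (cball q s) (\<lambda>p. 1 / dist p q) k c)"
    "card (zeros_x (cball q s) (\<lambda>p. 1 / dist p q) k c) \<le> 2"
    "finite (zeros_y (cball q s) (\<lambda>p. 1 / dist p q) k c)"
    "card (zeros_y (cball q s) (\<lambda>p. 1 / dist p q) k c) \<le> 2"
    using axis_zeros_inverse_dist_subset_pair[OF assms \<open>k \<le> 2\<close>] finite_card_le_2_if_subset
    by (metis zeros_x_eq_axis_zeros zeros_y_eq_axis_zeros)+
qed (use assms very_moderate_decrease_inverse_dist moderate_decrease_pd_inverse_dist in auto)

section \<open>Potentials of densities supported in a square\<close>

lemma compact_bound_continuous_pair: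
  fixes f g :: "'a::topological_space \<Rightarrow> real"
  assumes "compact S" "continuous_on S f" "continuous_on S g"
  obtains K where "0 \<le> K" "\<And>x. x \<in> S \<Longrightarrow> \<bar>f x\<bar> \<le> K \<and> \<bar>g x\<bar> \<le> K"
proof -
  have "bounded ((\<lambda>x. \<bar>f x\<bar> + \<bar>g x\<bar>) ` S)"
    by (intro compact_imp_bounded compact_continuous_image continuous_intros assms)
  then obtain K where "\<And>x. x \<in> S \<Longrightarrow> \<bar>\<bar>f x\<bar> + \<bar>g x\<bar>\<bar> \<le> K"
    unfolding bounded_real by blast
  then show thesis
    by (intro that[of "\<bar>K\<bar>"]) fastforce+
qed

lemma has_derivative_parametric_integral:
  fixes g gx gy :: "real \<times> real \<Rightarrow> 'b::euclidean_space \<Rightarrow> real"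
  assumes "open U" "convex U" "p \<in> U"
    and "\<And>p q. p \<in> U \<Longrightarrow> q \<in> cbox a b \<Longrightarrow>
      ((\<lambda>p. g p q) has_derivative (\<lambda>h. fst h * gx p q + snd h * gy p q)) (at p)"
    and cont: "continuous_on (U \<times> cbox a b) (\<lambda>z. g (fst z) (snd z))"
      "continuous_on (U \<times> cbox a b) (\<lambda>z. gx (fst z) (snd z))"
      "continuous_on (U \<times> cbox a b) (\<lambda>z. gy (fst z) (snd z))"
  shows "((\<lambda>p. integral (cbox a b) (g p)) has_derivative
    (\<lambda>h. fst h * integral (cbox a b) (gx p) + snd h * integral (cbox a b) (gy p))) (at p)"
proof -
  have slice: "continuous_on (cbox a b) (f p)"
    if "continuous_on (U \<times> cbox a b) (\<lambda>z. f (fst z) (snd z))" "p \<in> U" for f :: "_ \<Rightarrow> _ \<Rightarrow> real" and p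
    by (rule continuous_on_compose2[OF that(1), of _ "\<lambda>q. (p, q)", simplified])
       (use that(2) in \<open>auto intro!: continuous_intros\<close>)
  have integrable: "f p integrable_on cbox a b"
    if "continuous_on (U \<times> cbox a b) (\<lambda>z. f (fst z) (snd z))" "p \<in> U" for f :: "_ \<Rightarrow> _ \<Rightarrow> real" and p
    using slice[OF that] by (rule integrable_continuous)
  let ?G = "\<lambda>p q. blinfun_inner_left (gx p q, gy p q)"
  have G_apply: "blinfun_apply (?G p q) = (\<lambda>h. fst h * gx p q + snd h * gy p q)" for p q
    by (auto simp: inner_prod_def)
  have "((\<lambda>p. integral (cbox a b) (g p)) has_derivative integral (cbox a b) (?G p)) (at p within U)"
  proof (rule leibniz_rule)
    show "continuous_on (U \<times> cbox a b) (\<lambda>(p, q). ?G p q)"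
      unfolding split_beta
      by (intro bounded_linear.continuous_on[OF bounded_linear_blinfun_inner_left]
          continuous_on_Pair cont)
  qed (use assms integrable G_apply in \<open>auto intro: has_derivative_at_withinI\<close>)
  moreover have "blinfun_apply (integral (cbox a b) (?G p))
      = (\<lambda>h. fst h * integral (cbox a b) (gx p) + snd h * integral (cbox a b) (gy p))"
  proof
    fix h
    have "(\<lambda>q. ?G p q) integrable_on cbox a b"
      using \<open>p \<in> U\<close>
      by (intro integrable_continuous bounded_linear.continuous_on[OF bounded_linear_blinfun_inner_left]
          continuous_on_Pair slice[OF cont(2)] slice[OF cont(3)])
    then show "blinfun_apply (integral (cbox a b) (?G p)) h
        = fst h * integral (cbox a b) (gx p) + snd h * integral (cbox a b) (gy p)"
      using integrable[OF cont(2) \<open>p \<in> U\<close>] integrable[OF cont(3) \<open>p \<in> U\<close>]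
      by (simp add: blinfun_apply_integral inner_prod_def integral_add integrable_on_mult_right)
  qed
  ultimately show ?thesis
    using at_within_open[OF \<open>p \<in> U\<close> \<open>open U\<close>] by simp
qed

lemma mem_square_iff: "q \<in> cbox (-B, -B) (B, B) \<longleftrightarrow> (\<forall>d. \<bar>coord d q\<bar> \<le> B)"
  by (cases q) (auto simp: cbox_Pair_eq coord_def abs_le_iff all_bool_eq)

lemma norm_le_of_mem_square: "q \<in> cbox (-B, -B) (B, B) \<Longrightarrow> norm q \<le> 2 * B"
  using norm_Pair_le[of "fst q" "snd q"] mem_square_iff[of q B]
  by (cases q) (auto simp: coord_def)

lemma integral_mult_nonzero_if_signed:
  fixes f g :: "'a::euclidean_space \<Rightarrow> real"
  assumes "continuous_on (cbox a b) (\<lambda>x. f x * g x)" "box a b \<noteq> {}"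
    and "(\<forall>x\<in>cbox a b. 0 \<le> f x) \<or> (\<forall>x\<in>cbox a b. f x \<le> 0)"
    and "(\<forall>x\<in>cbox a b. 0 < g x) \<or> (\<forall>x\<in>cbox a b. g x < 0)"
    and "y \<in> cbox a b" "f y \<noteq> 0"
  shows "integral (cbox a b) (\<lambda>x. f x * g x) \<noteq> 0"
proof
  assume integral_0: "integral (cbox a b) (\<lambda>x. f x * g x) = 0"
  obtain \<sigma> :: real where "\<sigma> = 1 \<or> \<sigma> = -1" and nonneg: "\<And>x. x \<in> cbox a b \<Longrightarrow> 0 \<le> \<sigma> * (f x * g x)"
  proof -
    from assms(3,4) consider "\<forall>x\<in>cbox a b. 0 \<le> f x * g x" | "\<forall>x\<in>cbox a b. f x * g x \<le> 0"
      by (metis less_imp_le mult_nonneg_nonneg mult_nonneg_nonpos mult_nonpos_nonneg mult_nonpos_nonpos)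
    then show thesis
      using that[of 1] that[of "-1"] by cases auto
  qed
  have "((\<lambda>x. \<sigma> * (f x * g x)) has_integral 0) (cbox a b)"
    using has_integral_mult_right[OF integrable_integral[OF integrable_continuous[OF assms(1)]], of \<sigma>]
    by (simp add: integral_0)
  then have "\<sigma> * (f y * g y) = 0"
    using assms(1,2,5) nonneg box_subset_cbox[of a b]
    by (intro has_integral_0_cbox_imp_0[where f = "\<lambda>x. \<sigma> * (f x * g x)"]) (auto intro: continuous_intros)
  then show False
    using \<open>\<sigma> = 1 \<or> \<sigma> = -1\<close> assms(4,5,6) by auto
qed

lemma two_sq_less_sq_if_abs_small:
  fixes t u c w :: real
  assumes "\<bar>u\<bar> \<le> B" "\<bar>w\<bar> \<le> B" "\<bar>t\<bar> < (\<bar>c\<bar> - B) / sqrt 2 - B"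
  shows "2 * (t - u)^2 < (c - w)^2"
proof -
  have "\<bar>t - u\<bar> \<le> \<bar>t\<bar> + B"
    using abs_triangle_ineq4[of t u] assms(1) by linarith
  moreover have "(\<bar>c\<bar> - B) / sqrt 2 \<le> \<bar>c - w\<bar> / sqrt 2"
    using abs_triangle_ineq2[of c w] assms(2) by (intro divide_right_mono) auto
  ultimately have "\<bar>t - u\<bar> < \<bar>c - w\<bar> / sqrt 2"
    using assms(3) by linarith
  then have "sqrt 2 * \<bar>t - u\<bar> < \<bar>c - w\<bar>"
    by (simp add: pos_less_divide_eq mult.commute)
  then show ?thesis
    using real_sqrt_less_iff[of "2 * (t - u)^2" "(c - w)^2"] by (simp add: real_sqrt_mult)
qed

lemma sq_less_two_sq_if_abs_large:
  fixes t u c w :: real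
  assumes "\<bar>u\<bar> \<le> B" "\<bar>w\<bar> \<le> B" "(\<bar>c\<bar> + B) / sqrt 2 + B < \<bar>t\<bar>"
  shows "(c - w)^2 < 2 * (t - u)^2"
proof -
  have "\<bar>t\<bar> - B \<le> \<bar>t - u\<bar>"
    using abs_triangle_ineq2[of t u] assms(1) by linarith
  moreover have "\<bar>c - w\<bar> / sqrt 2 \<le> (\<bar>c\<bar> + B) / sqrt 2"
    using abs_triangle_ineq4[of c w] assms(2) by (intro divide_right_mono) auto
  ultimately have "\<bar>c - w\<bar> / sqrt 2 < \<bar>t - u\<bar>"
    using assms(3) by linarith
  then have "\<bar>c - w\<bar> < sqrt 2 * \<bar>t - u\<bar>"
    by (simp add: pos_divide_less_eq mult.commute)
  then show ?thesis
    using real_sqrt_less_iff[of "(c - w)^2" "2 * (t - u)^2"] by (simp add: real_sqrt_mult)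
qed

lemma abs_annulus_subset: "{t::real. N \<le> \<bar>t\<bar> \<and> \<bar>t\<bar> \<le> M} \<subseteq> {-(M + 1)<..<-(N - 1)} \<union> {N - 1<..<M + 1}"
  by auto

locale square_density =
  fixes \<rho> :: "real \<times> real \<Rightarrow> real" and B :: real
  assumes continuous_density: "continuous_on UNIV \<rho>"
    and B_pos: "B > 0"
    and support: "\<And>q. \<rho> q \<noteq> 0 \<Longrightarrow> q \<in> cbox (-B, -B) (B, B)"
begin

abbreviation square where "square \<equiv> cbox (-B, -B) (B, B)"

abbreviation W where "W \<equiv> cball (0::real \<times> real) (2 * B + 1)"

definition kernel_potential :: "kernel_term \<Rightarrow> real \<times> real \<Rightarrow> real" where
  "kernel_potential e p = integral square (\<lambda>q. \<rho> q * kernel_eval e p q)"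

lemma potential_eq_kernel_potential: "potential \<rho> = kernel_potential KInv"
proof
  fix p
  have "(\<lambda>q. \<rho> q / dist p q) = (\<lambda>q. if q \<in> square then \<rho> q * kernel_eval KInv p q else 0)"
    using support by (force simp: fun_eq_iff)
  then show "potential \<rho> p = kernel_potential KInv p"
    by (simp add: potential_def kernel_potential_def integral_restrict_UNIV)
qed

lemma dist_gt_1_if_notin_W:
  assumes "p \<notin> W" "q \<in> square"
  shows "1 < dist p q"
  using assms norm_le_of_mem_square[of q B] norm_triangle_ineq2[of p q]
  by (auto simp: dist_norm)

lemma continuous_on_kernel_integrand:
  assumes "A \<inter> W = {}"
  shows "continuous_on (A \<times> square) (\<lambda>z. \<rho> (snd z) * kernel_eval e (fst z) (snd z))"
proof (intro continuous_intros)
  show "continuous_on (A \<times> square) (\<lambda>z. \<rho> (snd z))"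
    by (rule continuous_on_compose2[OF continuous_density]) (auto intro: continuous_intros)
  have "A \<times> square \<subseteq> {z. fst z \<noteq> snd z}"
    using assms dist_gt_1_if_notin_W by fastforce
  then show "continuous_on (A \<times> square) (\<lambda>z. kernel_eval e (fst z) (snd z))"
    by (rule continuous_on_subset[OF continuous_on_kernel_eval])
qed

lemma continuous_on_kernel_integrand_at:
  assumes "p \<notin> W"
  shows "continuous_on square (\<lambda>q. \<rho> q * kernel_eval e p q)"
  by (rule continuous_on_compose2[OF continuous_on_kernel_integrand[of "{p}" e], of _ "\<lambda>q. (p, q)",
        simplified])
     (use assms in \<open>auto intro!: continuous_intros\<close>)

lemma integrable_kernel_integrand:
  "p \<notin> W \<Longrightarrow> (\<lambda>q. \<rho> q * kernel_eval e p q) integrable_on square"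
  by (rule integrable_continuous[OF continuous_on_kernel_integrand_at])

lemma has_derivative_kernel_potential:
  assumes "p \<notin> W"
  shows "(kernel_potential e has_derivative (\<lambda>h. fst h * kernel_potential (kernel_diff True e) p
    + snd h * kernel_potential (kernel_diff False e) p)) (at p)"
  unfolding kernel_potential_def[abs_def]
proof (rule has_derivative_parametric_integral)
  define U where "U = ball p (norm p - (2 * B + 1))"
  have "U \<inter> W = {}"
  proof safe
    fix x assume x: "x \<in> U" "x \<in> W"
    have "norm p \<le> norm x + dist p x"
      using norm_triangle_ineq[of x "p - x"] by (simp add: dist_norm)
    then show "x \<in> {}"
      using x by (simp add: U_def)
  qed
  then have cont: "continuous_on (U \<times> square) (\<lambda>z. \<rho> (snd z) * kernel_eval e' (fst z) (snd z))" for e'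
    by (rule continuous_on_kernel_integrand)
  then show "continuous_on (U \<times> square) (\<lambda>z. \<rho> (snd z) * kernel_eval e (fst z) (snd z))"
    "continuous_on (U \<times> square) (\<lambda>z. \<rho> (snd z) * kernel_eval (kernel_diff True e) (fst z) (snd z))"
    "continuous_on (U \<times> square) (\<lambda>z. \<rho> (snd z) * kernel_eval (kernel_diff False e) (fst z) (snd z))"
    by this+
  show "open U" "convex U" "p \<in> U"
    using assms by (auto simp: U_def)
  fix p' q assume "p' \<in> U" "q \<in> square"
  then have "1 < dist p' q"
    using \<open>U \<inter> W = {}\<close> by (intro dist_gt_1_if_notin_W) auto
  then have "p' \<noteq> q"
    by auto
  from has_derivative_mult_right[OF has_derivative_kernel_eval[OF this, of e], of "\<rho> q"]
  show "((\<lambda>p. \<rho> q * kernel_eval e p q) has_derivative (\<lambda>h. fst h * (\<rho> q * kernel_eval (kernel_diff True e) p' q)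
      + snd h * (\<rho> q * kernel_eval (kernel_diff False e) p' q))) (at p')"
    by (simp add: algebra_simps)
qed

lemma pderivs_potential:
  "p \<notin> W \<Longrightarrow> pderivs ds (potential \<rho>) p = kernel_potential (foldr kernel_diff ds KInv) p"
  unfolding potential_eq_kernel_potential
  by (rule pderivs_family[of "- W"]) (auto intro: has_derivative_kernel_potential)

lemma smooth_on_potential: "smooth_on (- W) (potential \<rho>)"
  unfolding potential_eq_kernel_potential
  by (rule smooth_on_family[of "- W" _ kernel_diff]) (auto intro: has_derivative_kernel_potential)

definition mass :: real where
  "mass = integral square (\<lambda>q. \<bar>\<rho> q\<bar>)"

lemma integrable_abs_density: "(\<lambda>q. \<bar>\<rho> q\<bar>) integrable_on square"
  by (intro integrable_continuous continuous_intros continuous_on_subset[OF continuous_density]) auto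

lemma mass_nonneg: "0 \<le> mass"
  unfolding mass_def by (rule integral_nonneg[OF integrable_abs_density]) auto

lemma abs_kernel_potential_le_inverse_power:
  assumes "p \<notin> W" and kernel_le: "\<And>q. q \<in> square \<Longrightarrow> \<bar>kernel_eval e p q\<bar> \<le> 1 / dist p q ^ n"
  shows "\<bar>kernel_potential e p\<bar> \<le> ((2 * B + 1) ^ n * mass + 1) / norm p ^ n"
proof -
  have "0 < norm p"
    using assms(1) B_pos by auto
  have kernel_bound: "\<bar>kernel_eval e p q\<bar> \<le> (2 * B + 1) ^ n / norm p ^ n" if "q \<in> square" for q
  proof -
    have "1 / dist p q ^ n \<le> (1 + 2 * B / 1) ^ n / norm p ^ n"
      using dist_gt_1_if_notin_W[OF assms(1) that] \<open>0 < norm p\<close>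
      by (intro inverse_dist_power_le norm_le_of_mem_square that) auto
    then show ?thesis
      using kernel_le[OF that] by (simp add: add.commute)
  qed
  have "norm (kernel_potential e p) \<le> integral square (\<lambda>q. (2 * B + 1) ^ n / norm p ^ n * \<bar>\<rho> q\<bar>)"
    unfolding kernel_potential_def
  proof (rule integral_norm_bound_integral)
    fix q assume "q \<in> square"
    from mult_left_mono[OF kernel_bound[OF this] abs_ge_zero, of "\<rho> q"]
    show "norm (\<rho> q * kernel_eval e p q) \<le> (2 * B + 1) ^ n / norm p ^ n * \<bar>\<rho> q\<bar>"
      by (simp add: abs_mult mult.commute)
  qed (intro integrable_kernel_integrand[OF assms(1)] integrable_on_mult_right integrable_abs_density)+
  also have "\<dots> = (2 * B + 1) ^ n * mass / norm p ^ n"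
    by (simp add: mass_def)
  also have "\<dots> \<le> ((2 * B + 1) ^ n * mass + 1) / norm p ^ n"
    using \<open>0 < norm p\<close> by (simp add: divide_right_mono)
  finally show ?thesis
    by simp
qed

lemma very_moderate_decrease_potential: "very_moderate_decrease W (potential \<rho>)"
  unfolding very_moderate_decrease_def
proof (intro exI[of _ "(2 * B + 1) * mass + 1"] conjI allI impI)
  show "0 < (2 * B + 1) * mass + 1"
    using B_pos mass_nonneg by (simp add: add_nonneg_pos)
  fix p assume "p \<notin> W \<and> 1 < norm p"
  then show "\<bar>potential \<rho> p\<bar> \<le> ((2 * B + 1) * mass + 1) / norm p"
    using abs_kernel_potential_le_inverse_power[of p KInv 1]
    by (simp add: potential_eq_kernel_potential)
qed

lemma moderate_decrease_pd_potential: "moderate_decrease W (pd d (potential \<rho>))"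
  unfolding moderate_decrease_def
proof (intro exI[of _ "(2 * B + 1)^2 * mass + 1"] conjI allI impI)
  show "0 < (2 * B + 1)^2 * mass + 1"
    using B_pos mass_nonneg by (simp add: add_nonneg_pos)
  fix p assume p: "p \<notin> W \<and> 1 < norm p"
  then have "pd d (potential \<rho>) p = kernel_potential (kernel_diff d KInv) p"
    using pderivs_potential[of p "[d]"] by simp
  then show "\<bar>pd d (potential \<rho>) p\<bar> \<le> ((2 * B + 1)^2 * mass + 1) / (norm p)^2"
    using abs_kernel_potential_le_inverse_power[of p "kernel_diff d KInv" 2] p
      abs_kernel_eval_diff_KInv_le
    by simp
qed

lemma analytic_at_infinity_potential: "analytic_at_infinity V (\<lambda>t. potential \<rho> (axis_line d c t))"
proof -
  define u where "u q = coord d q" for q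
  define v where "v q = dist q (axis_line d c 0) ^ 2" for q
  have cont: "continuous_on square \<rho>" "continuous_on square u" "continuous_on square v"
    using continuous_on_subset[OF continuous_density]
    by (auto simp: u_def v_def intro!: continuous_intros)
  obtain K where "0 \<le> K" and K: "\<And>q. q \<in> square \<Longrightarrow> \<bar>u q\<bar> \<le> K \<and> \<bar>v q\<bar> \<le> K"
    using compact_bound_continuous_pair[OF compact_cbox cont(2,3)] by blast
  define h where "h t = integral square (\<lambda>q. \<rho> q * (1 / sqrt (1 - 2 * u q * t + v q * t^2)))" for t
  show ?thesis
  proof (rule analytic_at_infinity_of_holomorphic[where h = h,
        OF holomorphic_on_integral_inverse_csqrt_dist_quad[OF cont K]])
    show "0 < 1 / (3*K + 1)"
      using \<open>0 \<le> K\<close> by (simp add: add_nonneg_pos)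
    fix t :: real
    assume t: "\<bar>t\<bar> < 1 / (3*K + 1)"
    have "continuous_on square (\<lambda>q. \<rho> q * (1 / sqrt (1 - 2 * u q * t + v q * t^2)))"
      using dist_quad_of_real_pos(1)[OF _ _ t] K
      by (intro continuous_intros cont) (auto simp: less_le)
    then have "((\<lambda>q. of_real (\<rho> q * (1 / sqrt (1 - 2 * u q * t + v q * t^2))) :: complex)
        has_integral of_real (h t)) square"
      unfolding h_def by (intro has_integral_of_real integrable_integral integrable_continuous)
    then show "integral square (\<lambda>q. of_real (\<rho> q) / csqrt (dist_quad (u q) (v q) (of_real t)))
        = of_real (h t)"
      using dist_quad_of_real_pos(2)[OF _ _ t] K
      by (intro integral_unique) (auto intro: has_integral_eq simp: divide_inverse)
  next
    fix t :: real
    assume "t \<noteq> 0"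
    then show "potential \<rho> (axis_line d c (1/t)) = \<bar>t\<bar> * h t"
      by (simp add: potential_eq_kernel_potential kernel_potential_def h_def u_def v_def
          inverse_dist_axis_line_reciprocal mult.commute flip: integral_mult_right)
  qed
qed

lemma basic_conditions_potential: "basic_conditions W (potential \<rho>)"
  unfolding basic_conditions_def
proof (intro conjI allI)
  show "analytic_at_infinity {y. (x, y) \<in> W} (\<lambda>y. potential \<rho> (x, y))" for x
    using analytic_at_infinity_potential[of _ False x] by (simp add: axis_line_def)
  show "analytic_at_infinity {x. (x, y) \<in> W} (\<lambda>x. potential \<rho> (x, y))" for y
    using analytic_at_infinity_potential[of _ True y] by (simp add: axis_line_def)
qed (simp_all add: smooth_on_potential very_moderate_decrease_potential moderate_decrease_pd_potential)

lemma axis_line_notin_W: "2 * B + 1 < \<bar>c\<bar> \<Longrightarrow> axis_line d c t \<notin> W"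
  using abs_coord_le_norm[of "\<not> d" "axis_line d c t"] by auto

lemma dist_axis_line_gt_1: "2 * B + 1 < \<bar>c\<bar> \<Longrightarrow> q \<in> square \<Longrightarrow> 1 < dist (axis_line d c t) q"
  by (rule dist_gt_1_if_notin_W[OF axis_line_notin_W])

lemma axis_zeros_potential:
  assumes "2 * B + 1 < \<bar>c\<bar>"
  shows "axis_zeros W (potential \<rho>) d k c
    = {t. kernel_potential ((kernel_diff d ^^ k) KInv) (axis_line d c t) = 0}"
  using pderivs_potential axis_line_notin_W[OF assms] by (simp add: axis_zeros_def)

end

locale signed_square_density = square_density +
  assumes sign: "(\<forall>q. 0 \<le> \<rho> q) \<or> (\<forall>q. \<rho> q \<le> 0)"
    and nontrivial: "\<exists>q. \<rho> q \<noteq> 0"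
begin

lemma kernel_potential_nonzero:
  assumes "p \<notin> W" and "(\<forall>q\<in>square. 0 < kernel_eval e p q) \<or> (\<forall>q\<in>square. kernel_eval e p q < 0)"
  shows "kernel_potential e p \<noteq> 0"
proof -
  obtain q0 where "\<rho> q0 \<noteq> 0"
    using nontrivial by blast
  show ?thesis
    unfolding kernel_potential_def
  proof (rule integral_mult_nonzero_if_signed[where y = q0])
    show "box (-B, -B) (B, B) \<noteq> {}"
      using B_pos by (auto simp: box_ne_empty Basis_prod_def inner_Pair)
    show "(\<forall>q\<in>square. 0 \<le> \<rho> q) \<or> (\<forall>q\<in>square. \<rho> q \<le> 0)"
      using sign by blast
  qed (use assms \<open>\<rho> q0 \<noteq> 0\<close> support continuous_on_kernel_integrand_at in auto)
qed

lemma axis_zeros_potential_0: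
  assumes "2 * B + 1 < \<bar>c\<bar>"
  shows "axis_zeros W (potential \<rho>) d 0 c = {}"
proof -
  have "\<forall>q\<in>square. 0 < kernel_eval KInv (axis_line d c t) q" for t
    using dist_axis_line_gt_1[OF assms, where d = d and t = t] by force
  then have "kernel_potential KInv (axis_line d c t) \<noteq> 0" for t
    by (intro kernel_potential_nonzero[OF axis_line_notin_W[OF assms]] disjI1)
  then show ?thesis
    by (simp add: axis_zeros_potential[OF assms])
qed

lemma not_signed_if_mem_axis_zeros_potential:
  assumes "2 * B + 1 < \<bar>c\<bar>" "t \<in> axis_zeros W (potential \<rho>) d k c"
  shows "\<not> (\<forall>q\<in>square. 0 < kernel_eval ((kernel_diff d ^^ k) KInv) (axis_line d c t) q)"
    and "\<not> (\<forall>q\<in>square. kernel_eval ((kernel_diff d ^^ k) KInv) (axis_line d c t) q < 0)"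
proof -
  have "kernel_potential ((kernel_diff d ^^ k) KInv) (axis_line d c t) = 0"
    using assms(2) by (simp add: axis_zeros_potential[OF assms(1)])
  then show "\<not> (\<forall>q\<in>square. 0 < kernel_eval ((kernel_diff d ^^ k) KInv) (axis_line d c t) q)"
    and "\<not> (\<forall>q\<in>square. kernel_eval ((kernel_diff d ^^ k) KInv) (axis_line d c t) q < 0)"
    using kernel_potential_nonzero[OF axis_line_notin_W[OF assms(1)]] by blast+
qed

lemma abs_le_if_mem_axis_zeros_potential_1:
  assumes "2 * B + 1 < \<bar>c\<bar>" "t \<in> axis_zeros W (potential \<rho>) d 1 c"
  shows "\<bar>t\<bar> \<le> B"
proof (rule ccontr)
  assume "\<not> \<bar>t\<bar> \<le> B"
  let ?k = "\<lambda>q. kernel_eval (kernel_diff d KInv) (axis_line d c t) q"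
  have kernel: "?k q = - (t - coord d q) / dist (axis_line d c t) q ^ 3"
    and dist_pos: "0 < dist (axis_line d c t) q ^ 3" and coord_bound: "\<bar>coord d q\<bar> \<le> B"
    if "q \<in> square" for q
    using dist_axis_line_gt_1[OF assms(1) that, where d = d and t = t] that
    by (simp_all only: kernel_eval_diff_KInv coord_axis_line mem_square_iff) auto
  have "?k q < 0" if "0 < t" "q \<in> square" for q
    unfolding kernel[OF that(2)]
    using that \<open>\<not> \<bar>t\<bar> \<le> B\<close> coord_bound[OF that(2)]
    by (intro divide_neg_pos dist_pos[OF that(2)]) (simp add: abs_le_iff)
  moreover have "0 < ?k q" if "t \<le> 0" "q \<in> square" for q
    unfolding kernel[OF that(2)]
    using that \<open>\<not> \<bar>t\<bar> \<le> B\<close> coord_bound[OF that(2)]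
    by (intro divide_pos_pos dist_pos[OF that(2)]) (simp add: abs_le_iff)
  moreover note not_signed_if_mem_axis_zeros_potential[OF assms,
      unfolded One_nat_def funpow.simps comp_apply id_apply]
  ultimately show False
    by (cases "0 < t") (blast, meson not_less)
qed

lemma abs_bounds_if_mem_axis_zeros_potential_2:
  assumes "2 * B + 1 < \<bar>c\<bar>" "t \<in> axis_zeros W (potential \<rho>) d 2 c"
  shows "(\<bar>c\<bar> - B) / sqrt 2 - B \<le> \<bar>t\<bar> \<and> \<bar>t\<bar> \<le> (\<bar>c\<bar> + B) / sqrt 2 + B"
proof -
  let ?p = "axis_line d c t"
  let ?k = "\<lambda>q. kernel_eval (kernel_diff d (kernel_diff d KInv)) ?p q"
  have kernel: "?k q = (2 * (t - coord d q)^2 - (c - coord (\<not> d) q)^2) / dist ?p q ^ 5"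
    and dist_pos: "0 < dist ?p q ^ 5"
    and coord_bound: "\<bar>coord d q\<bar> \<le> B" "\<bar>coord (\<not> d) q\<bar> \<le> B"
    if "q \<in> square" for q
  proof -
    have "1 < dist ?p q"
      by (rule dist_axis_line_gt_1[OF assms(1) that])
    then have "?p \<noteq> q"
      by (metis dist_self not_one_less_zero)
    from kernel_eval_diff_diff_KInv[OF this, of d]
    show "?k q = (2 * (t - coord d q)^2 - (c - coord (\<not> d) q)^2) / dist ?p q ^ 5"
      by (simp only: coord_axis_line)
    show "0 < dist ?p q ^ 5"
      using \<open>1 < dist ?p q\<close> by (intro zero_less_power) linarith
    show "\<bar>coord d q\<bar> \<le> B" "\<bar>coord (\<not> d) q\<bar> \<le> B"
      using that by (simp_all add: mem_square_iff)
  qed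
  note not_signed = not_signed_if_mem_axis_zeros_potential[OF assms,
      unfolded numeral_2_eq_2 funpow.simps comp_apply id_apply]
  show ?thesis
  proof (intro conjI; rule ccontr)
    assume "\<not> (\<bar>c\<bar> - B) / sqrt 2 - B \<le> \<bar>t\<bar>"
    then have "?k q < 0" if "q \<in> square" for q
      unfolding kernel[OF that]
      using two_sq_less_sq_if_abs_small[OF coord_bound[OF that]]
      by (intro divide_neg_pos dist_pos[OF that]) simp
    with not_signed(2) show False
      by blast
  next
    assume "\<not> \<bar>t\<bar> \<le> (\<bar>c\<bar> + B) / sqrt 2 + B"
    then have "0 < ?k q" if "q \<in> square" for q
      unfolding kernel[OF that]
      using sq_less_two_sq_if_abs_large[OF coord_bound[OF that]]
      by (intro divide_pos_pos dist_pos[OF that]) simp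
    with not_signed(1) show False
      by blast
  qed
qed

lemma axis_zeros_potential_in_annulus:
  assumes "2 * B + 1 < \<bar>c\<bar>" "k \<le> 2"
  shows "\<exists>N M. M - N \<le> 4 * B \<and> axis_zeros W (potential \<rho>) d k c \<subseteq> {t. N \<le> \<bar>t\<bar> \<and> \<bar>t\<bar> \<le> M}"
proof -
  have "k = 0 \<or> k = 1 \<or> k = 2"
    using assms(2) by auto
  then show ?thesis
  proof (elim disjE)
    assume "k = 0"
    then show ?thesis
      using axis_zeros_potential_0[OF assms(1)] B_pos by (intro exI[of _ 0] exI[of _ 0]) auto
  next
    assume "k = 1"
    then show ?thesis
      using abs_le_if_mem_axis_zeros_potential_1[OF assms(1)] B_pos
      by (intro exI[of _ 0] exI[of _ B]) auto
  next
    assume "k = 2"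
    have "2 * B / sqrt 2 \<le> 2 * B"
      using B_pos by (simp add: divide_le_eq)
    then show ?thesis
      using abs_bounds_if_mem_axis_zeros_potential_2[OF assms(1)] \<open>k = 2\<close>
      by (intro exI[of _ "(\<bar>c\<bar> - B) / sqrt 2 - B"] exI[of _ "(\<bar>c\<bar> + B) / sqrt 2 + B"])
         (auto simp: diff_divide_distrib add_divide_distrib)
  qed
qed

lemma quasi_normal_potential: "quasi_normal W (potential \<rho>)"
proof -
  have "(\<exists>M N. M - N \<le> 4 * B + 2 \<and> zeros_x W (potential \<rho>) k c \<subseteq> {-M<..<-N} \<union> {N<..<M})
      \<and> (\<exists>M N. M - N \<le> 4 * B + 2 \<and> zeros_y W (potential \<rho>) k c \<subseteq> {-M<..<-N} \<union> {N<..<M})"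
    if k: "k \<le> 2" and c: "2 * B + 1 < \<bar>c\<bar>" for k c
  proof -
    have "\<exists>M N. M - N \<le> 4 * B + 2 \<and> axis_zeros W (potential \<rho>) d k c \<subseteq> {-M<..<-N} \<union> {N<..<M}" for d
    proof -
      obtain N M where "M - N \<le> 4 * B" "axis_zeros W (potential \<rho>) d k c \<subseteq> {t. N \<le> \<bar>t\<bar> \<and> \<bar>t\<bar> \<le> M}"
        using axis_zeros_potential_in_annulus[OF c k] by blast
      then show ?thesis
        using abs_annulus_subset[of N M] by (intro exI[of _ "M + 1"] exI[of _ "N - 1"]) auto
    qed
    then show ?thesis
      by (simp add: zeros_x_eq_axis_zeros zeros_y_eq_axis_zeros)
  qed
  then show ?thesis
    unfolding quasi_normal_def using basic_conditions_potential by blast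
qed

end

context square_density
begin

lemma potential_add:
  assumes "square_density \<rho>' B" "p \<notin> W"
  shows "potential (\<lambda>q. \<rho> q + \<rho>' q) p = potential \<rho> p + potential \<rho>' p"
proof -
  interpret other: square_density \<rho>' B
    by fact
  interpret sum: square_density "\<lambda>q. \<rho> q + \<rho>' q" B
  proof
    show "continuous_on UNIV (\<lambda>q. \<rho> q + \<rho>' q)"
      by (intro continuous_intros continuous_density other.continuous_density)
    show "\<rho> q + \<rho>' q \<noteq> 0 \<Longrightarrow> q \<in> square" for q
      using support[of q] other.support[of q] by (cases "\<rho> q = 0") auto
  qed (rule B_pos)
  show ?thesis
    unfolding potential_eq_kernel_potential other.potential_eq_kernel_potential
      sum.potential_eq_kernel_potential kernel_potential_def other.kernel_potential_def
      sum.kernel_potential_def distrib_right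
    by (rule integral_add[OF integrable_kernel_integrand[OF assms(2)]
          other.integrable_kernel_integrand[OF assms(2)]])
qed

lemma signed_square_densityI:
  assumes "continuous_on UNIV \<sigma>" "\<And>q. \<sigma> q \<noteq> 0 \<Longrightarrow> \<rho> q \<noteq> 0"
    and "(\<forall>q. 0 \<le> \<sigma> q) \<or> (\<forall>q. \<sigma> q \<le> 0)" "\<sigma> q' \<noteq> 0"
  shows "signed_square_density \<sigma> B"
  by unfold_locales (use assms B_pos support in blast)+

text \<open>If \<open>\<rho>\<close> has a sign, one of \<open>max \<rho> 0\<close> and \<open>min \<rho> 0\<close> vanishes, and the zero potential is not
quasi normal (its zeros fill whole lines); then \<open>\<rho>\<close> is halved instead.\<close>

lemma split_into_signed_densities:
  assumes "\<rho> q' \<noteq> 0"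
  obtains \<rho>1 \<rho>2 where "signed_square_density \<rho>1 B" "signed_square_density \<rho>2 B"
    "\<rho> = (\<lambda>q. \<rho>1 q + \<rho>2 q)"
proof (cases "(\<exists>q. 0 < \<rho> q) \<and> (\<exists>q. \<rho> q < 0)")
  case True
  then obtain q1 q2 where "0 < \<rho> q1" "\<rho> q2 < 0"
    by blast
  have "signed_square_density (\<lambda>q. max (\<rho> q) 0) B"
  proof (rule signed_square_densityI[where q' = q1])
    show "continuous_on UNIV (\<lambda>q. max (\<rho> q) 0)"
      by (intro continuous_intros continuous_density)
    show "(\<forall>q. 0 \<le> max (\<rho> q) 0) \<or> (\<forall>q. max (\<rho> q) 0 \<le> 0)"
      by simp
  qed (use \<open>0 < \<rho> q1\<close> in auto)
  moreover have "signed_square_density (\<lambda>q. min (\<rho> q) 0) B"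
  proof (rule signed_square_densityI[where q' = q2])
    show "continuous_on UNIV (\<lambda>q. min (\<rho> q) 0)"
      by (intro continuous_intros continuous_density)
    show "(\<forall>q. 0 \<le> min (\<rho> q) 0) \<or> (\<forall>q. min (\<rho> q) 0 \<le> 0)"
      by simp
  qed (use \<open>\<rho> q2 < 0\<close> in auto)
  moreover have "\<rho> = (\<lambda>q. max (\<rho> q) 0 + min (\<rho> q) 0)"
    by (simp add: fun_eq_iff max_def min_def)
  ultimately show thesis
    by (rule that)
next
  case False
  have half: "signed_square_density (\<lambda>q. \<rho> q / 2) B"
  proof (rule signed_square_densityI[where q' = q'])
    show "continuous_on UNIV (\<lambda>q. \<rho> q / 2)"
      by (intro continuous_intros continuous_density) simp
    show "(\<forall>q. 0 \<le> \<rho> q / 2) \<or> (\<forall>q. \<rho> q / 2 \<le> 0)"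
      using False by (auto simp: not_less)
  qed (use assms in auto)
  have "\<rho> = (\<lambda>q. \<rho> q / 2 + \<rho> q / 2)"
    by simp
  then show thesis
    by (rule that[OF half half])
qed

lemma quasi_split_normal_potential:
  assumes "\<rho> q' \<noteq> 0"
  shows "quasi_split_normal W (potential \<rho>)"
proof -
  obtain \<rho>1 \<rho>2 where "signed_square_density \<rho>1 B" "signed_square_density \<rho>2 B"
    and \<rho>: "\<rho> = (\<lambda>q. \<rho>1 q + \<rho>2 q)"
    using split_into_signed_densities[OF assms] by blast
  interpret S1: signed_square_density \<rho>1 B by fact
  interpret S2: signed_square_density \<rho>2 B by fact
  have "potential \<rho> p = potential \<rho>1 p + potential \<rho>2 p" if "2 * B + 1 < norm p" for p
    unfolding \<rho> using S1.potential_add[OF S2.square_density_axioms] that by simp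
  then show ?thesis
    unfolding quasi_split_normal_def
    using basic_conditions_potential S1.quasi_normal_potential S2.quasi_normal_potential by blast
qed

end

lemma square_support_if_compact:
  fixes \<rho> :: "real \<times> real \<Rightarrow> real"
  assumes "compact (closure {p. \<rho> p \<noteq> 0})"
  obtains B where "B > 0" "\<And>q. \<rho> q \<noteq> 0 \<Longrightarrow> q \<in> cbox (-B, -B) (B, B)"
proof -
  obtain b where b: "\<And>x. x \<in> closure {p. \<rho> p \<noteq> 0} \<Longrightarrow> norm x \<le> b"
    using compact_imp_bounded[OF assms] unfolding bounded_iff by blast
  show thesis
  proof (rule that[of "\<bar>b\<bar> + 1"])
    fix q assume "\<rho> q \<noteq> 0"
    then have "norm q \<le> b"
      using b[of q] closure_subset[of "{p. \<rho> p \<noteq> 0}"] \<open>\<rho> q \<noteq> 0\<close> by blast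
    then have "\<bar>coord d q\<bar> \<le> \<bar>b\<bar> + 1" for d
      using abs_coord_le_norm[of d q] by linarith
    then show "q \<in> cbox (-(\<bar>b\<bar> + 1), -(\<bar>b\<bar> + 1)) (\<bar>b\<bar> + 1, \<bar>b\<bar> + 1)"
      unfolding mem_square_iff by blast
  qed simp
qed

lemma quasi_normal_potential_if_nonneg:
  assumes "continuous_on UNIV \<rho>" "\<forall>p. 0 \<le> \<rho> p" "compact (closure {p. \<rho> p \<noteq> 0})" "\<exists>p. \<rho> p \<noteq> 0"
  shows "\<exists>W. quasi_normal W (potential \<rho>)"
proof -
  obtain B where "B > 0" "\<And>q. \<rho> q \<noteq> 0 \<Longrightarrow> q \<in> cbox (-B, -B) (B, B)"
    using square_support_if_compact[OF assms(3)] by blast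
  then interpret signed_square_density \<rho> B
    using assms by unfold_locales blast+
  show ?thesis
    using quasi_normal_potential by blast
qed

lemma quasi_split_normal_potential_if_smooth:
  assumes "smooth_on UNIV \<rho>" "compact (closure {p. \<rho> p \<noteq> 0})" "\<exists>p. \<rho> p \<noteq> 0"
  shows "\<exists>W. quasi_split_normal W (potential \<rho>)"
proof -
  obtain B where "B > 0" "\<And>q. \<rho> q \<noteq> 0 \<Longrightarrow> q \<in> cbox (-B, -B) (B, B)"
    using square_support_if_compact[OF assms(2)] by blast
  moreover have "continuous_on UNIV \<rho>"
  proof -
    have "pderivs [] \<rho> differentiable_on UNIV"
      using assms(1) unfolding smooth_on_def by blast
    then show ?thesis
      by (simp add: differentiable_imp_continuous_on)
  qed
  ultimately interpret square_density \<rho> B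
    by unfold_locales blast+
  obtain q' where "\<rho> q' \<noteq> 0"
    using assms(3) by blast
  then show ?thesis
    using quasi_split_normal_potential by blast
qed

theorem lemma8:
  shows "(\<forall>(a::real) (b::real) (s::real). s > 0 \<longrightarrow>
            normal (cball (a,b) s) (\<lambda>p. 1 / dist p (a,b)))
       \<and> (\<forall>\<rho> :: real \<times> real \<Rightarrow> real.
            continuous_on UNIV \<rho> \<and> (\<forall>p. \<rho> p \<ge> 0) \<and>
            compact (closure {p. \<rho> p \<noteq> 0}) \<and> (\<exists>p. \<rho> p \<noteq> 0) \<longrightarrow>
            (\<exists>W. quasi_normal W (potential \<rho>)))
       \<and> (\<forall>\<rho> :: real \<times> real \<Rightarrow> real.
            smooth_on UNIV \<rho> \<and>
            compact (closure {p. \<rho> p \<noteq> 0}) \<and> (\<exists>p. \<rho> p \<noteq> 0) \<longrightarrow>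
            (\<exists>W. quasi_split_normal W (potential \<rho>)))"
  using normal_inverse_dist quasi_normal_potential_if_nonneg quasi_split_normal_potential_if_smooth
  by blast

end
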